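(* Let $m,n$ be coprime positive integers with $\sqrt3 < m/n \le 3$, let $p = m^2-3n^2$, $r = 2mn$, $q = m^2+3n^2$, and let $\theta\in[\pi/3,\pi/2)$ be the angle with $\cos\theta = p/q$, $\sin\theta = \frac{r}{q}\sqrt3$. Then the lattice $$\Omega_\theta = \begin{bmatrix} m & m \\ n\sqrt3 & -n\sqrt3\end{bmatrix}\mathbb{Z}^2$$ belongs to $\mathrm{WR}(\Lambda_h)$, and satisfies $|\Omega_\theta| = q$, $\det(\Omega_\theta) = r\sqrt3$, $|\Lambda_h:\Omega_\theta| = 2r$, and $\Omega_\theta \in C_h(\theta)$. Hence $C_h(\theta)$ is the set of all lattices in $\mathrm{WR}(\Lambda_h)$ similar to $\Omega_\theta$.
   Context: $\Lambda_h = \begin{bmatrix} 1 & -1/2 \\ 0 & \sqrt3/2\end{bmatrix}\mathbb{Z}^2$ is the hexagonal lattice. For a full-rank lattice $\Gamma = A\mathbb{Z}^2\subset\mathbb{R}^2$, $\det\Gamma = |\det A|$, $|\Gamma| = \min\{\|y\|^2 : y\in\Gamma\setminus\{0\}\}$, and for $\Gamma\subseteq\Lambda_h$, $|\Lambda_h:\Gamma| = \det\Gamma/\det\Lambda_h$. $\Gamma$ is well-rounded (WR) if it has a basis of vectors of squared norm $|\Gamma|$ (a minimal basis); such a basis can be chosen with angle in $[\pi/3,\pi/2]$ between its vectors, and this angle $\theta(\Gamma)$ is an invariant of $\Gamma$. $\mathrm{WR}(\Lambda_h)$ is the set of full-rank WR sublattices of $\Lambda_h$, and $C_h(\theta) =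 \{\Omega\in\mathrm{WR}(\Lambda_h) : \theta(\Omega)=\theta\}$. Lattices $\Gamma_1,\Gamma_2$ are similar if $\Gamma_2=\alpha A\Gamma_1$ for some nonzero real $\alpha$ and $A\in O_2(\mathbb{R})$. *)

theory Defs
  imports "HOL-Analysis.Analysis"
begin

definition vec2 :: "real \<Rightarrow> real \<Rightarrow> real^2" where
  "vec2 a b = vector [a, b]"

definition lattice_gen :: "real^2 \<Rightarrow> real^2 \<Rightarrow> (real^2) set" where
  "lattice_gen u v = {of_int a *\<^sub>R u + of_int b *\<^sub>R v | a b. True}"

definition det2 :: "real^2 \<Rightarrow> real^2 \<Rightarrow> real" where
  "det2 u v = u$1 * v$2 - u$2 * v$1"

definition is_lattice_basis :: "(real^2) set \<Rightarrow> real^2 \<Rightarrow> real^2 \<Rightarrow> bool" where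
  "is_lattice_basis L u v \<longleftrightarrow> det2 u v \<noteq> 0 \<and> L = lattice_gen u v"

definition full_rank_lattice :: "(real^2) set \<Rightarrow> bool" where
  "full_rank_lattice L \<longleftrightarrow> (\<exists>u v. is_lattice_basis L u v)"

definition lattice_det :: "(real^2) set \<Rightarrow> real" where
  "lattice_det L = (THE d. \<exists>u v. is_lattice_basis L u v \<and> d = \<bar>det2 u v\<bar>)"

text \<open>|Gamma| = minimal squared norm of a nonzero vector.\<close>
definition lattice_min :: "(real^2) set \<Rightarrow> real" where
  "lattice_min L = Inf {(norm y)\<^sup>2 | y. y \<in> L \<and> y \<noteq> 0}"

definition vec_angle :: "real^2 \<Rightarrow> real^2 \<Rightarrow> real" where
  "vec_angle u v = arccos ((u \<bullet> v) / (norm u * norm v))"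

definition minimal_basis :: "(real^2) set \<Rightarrow> real^2 \<Rightarrow> real^2 \<Rightarrow> bool" where
  "minimal_basis L u v \<longleftrightarrow> is_lattice_basis L u v \<and>
     (norm u)\<^sup>2 = lattice_min L \<and> (norm v)\<^sup>2 = lattice_min L"

definition well_rounded :: "(real^2) set \<Rightarrow> bool" where
  "well_rounded L \<longleftrightarrow> full_rank_lattice L \<and> (\<exists>u v. minimal_basis L u v)"

definition wr_angle :: "(real^2) set \<Rightarrow> real" where
  "wr_angle L = (THE t. \<exists>u v. minimal_basis L u v \<and> t = vec_angle u v
                        \<and> pi/3 \<le> t \<and> t \<le> pi/2)"

definition hex_lattice :: "(real^2) set" where
  "hex_lattice = lattice_gen (vec2 1 0) (vec2 (-1/2) (sqrt 3 / 2))"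

definition lattice_index :: "(real^2) set \<Rightarrow> (real^2) set \<Rightarrow> real" where
  "lattice_index L G = lattice_det G / lattice_det L"

definition WR_hex :: "(real^2) set set" where
  "WR_hex = {L. full_rank_lattice L \<and> L \<subseteq> hex_lattice \<and> well_rounded L}"

definition C_hex :: "real \<Rightarrow> (real^2) set set" where
  "C_hex t = {L \<in> WR_hex. wr_angle L = t}"

definition similar_lattices :: "(real^2) set \<Rightarrow> (real^2) set \<Rightarrow> bool" where
  "similar_lattices L1 L2 \<longleftrightarrow>
     (\<exists>\<alpha> A. \<alpha> \<noteq> 0 \<and> orthogonal_transformation A \<and> L2 = (\<lambda>x. \<alpha> *\<^sub>R A x) ` L1)"

end

theory Submission imports Defs begin

text \<open>
  A basis u, v with \<open>|u| = |v|\<close> and \<open>2|u\<bullet>v| \<le> |u|\<^sup>2\<close> is a minimal basis of the lattice it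
  generates, since the quadratic form \<open>a\<^sup>2 + b\<^sup>2 - |ab|\<close> is at least 1 on nonzero integer
  vectors. For \<open>\<surd>3 < m/n \<le> 3\<close> the two columns of \<open>\<Omega>\<close> form such a basis, which gives the
  minimum, the determinant and the angle \<open>arccos (p/q) = \<theta>\<close>. Two well-rounded lattices are
  similar iff their angles agree: the linear map carrying one reduced minimal basis to the
  other scales all inner products by the same factor, because the Gram matrices of the two
  bases are proportional. Neither the coprimality of m and n nor the value of \<open>sin \<theta>\<close> is
  needed: an angle in \<open>[\<pi>/3, \<pi>/2)\<close> is determined by its cosine.
\<close>

lemma vec2_nth [simp]: "vec2 a b $ 1 = a" "vec2 a b $ 2 = b"
  by (simp_all add: vec2_def)

lemma vec2_eq_iff: "(z::real^2) = w \<longleftrightarrow> z$1 = w$1 \<and> z$2 = w$2"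
  by (simp add: vec_eq_iff forall_2)

lemma inner_real2: "(z::real^2) \<bullet> w = z$1 * w$1 + z$2 * w$2"
  by (simp add: inner_vec_def sum_2)

lemma norm_power2_real2: "(norm (z::real^2))\<^sup>2 = (z$1)\<^sup>2 + (z$2)\<^sup>2"
  unfolding power2_norm_eq_inner inner_real2 by (simp add: power2_eq_square)

lemma inner_lincomb:
  "(a *\<^sub>R u + b *\<^sub>R v) \<bullet> (c *\<^sub>R u + d *\<^sub>R v) =
     a * c * (u \<bullet> u) + (a * d + b * c) * (u \<bullet> v) + b * d * (v \<bullet> v)"
  by (simp add: inner_add_left inner_add_right inner_commute algebra_simps)

lemma det2_lincomb:
  "det2 (a *\<^sub>R u + b *\<^sub>R v) (c *\<^sub>R u + d *\<^sub>R v) = (a * d - b * c) * det2 u v"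
  by (simp add: det2_def algebra_simps)

lemma det2_self [simp]: "det2 u u = 0"
  by (simp add: det2_def)

lemma det2_nonzero_imp_nonzero:
  assumes "det2 u v \<noteq> 0" shows "u \<noteq> 0" "v \<noteq> 0"
  using assms by (auto simp: det2_def)

lemma det2_lagrange: "(det2 u v)\<^sup>2 + (u \<bullet> v)\<^sup>2 = (norm u)\<^sup>2 * (norm v)\<^sup>2"
  unfolding norm_power2_real2 by (simp add: det2_def inner_real2 power2_eq_square algebra_simps)

lemma cramer_real2:
  assumes "det2 u v \<noteq> 0"
  shows "z = (det2 z v / det2 u v) *\<^sub>R u + (det2 u z / det2 u v) *\<^sub>R v"
proof -
  have "det2 z v * u$1 + det2 u z * v$1 = det2 u v * z$1"
    "det2 z v * u$2 + det2 u z * v$2 = det2 u v * z$2"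
    by (simp_all add: det2_def algebra_simps)
  then show ?thesis
    using assms by (simp add: vec2_eq_iff field_simps)
qed

lemma linear_map_of_basis:
  assumes "det2 u v \<noteq> 0"
  obtains g :: "real^2 \<Rightarrow> real^2" where "linear g" "g u = x" "g v = y"
proof
  let ?g = "\<lambda>z. (det2 z v / det2 u v) *\<^sub>R x + (det2 u z / det2 u v) *\<^sub>R y"
  have det2_linear: "det2 (z + w) v = det2 z v + det2 w v" "det2 (r *\<^sub>R z) v = r * det2 z v"
    "det2 u (z + w) = det2 u z + det2 u w" "det2 u (r *\<^sub>R z) = r * det2 u z" for z w r
    by (simp_all add: det2_def algebra_simps)
  show "linear ?g"
    by (rule linearI) (simp_all add: det2_linear add_divide_distrib scaleR_add_left scaleR_add_right)
  show "?g u = x" "?g v = y"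
    using assms by simp_all
qed

lemma det2_sq_of_scaled_inner:
  assumes "\<And>z w. g z \<bullet> g w = c * (z \<bullet> w)"
  shows "(det2 (g u) (g v))\<^sup>2 = c\<^sup>2 * (det2 u v)\<^sup>2"
proof -
  have norm_g: "(norm (g z))\<^sup>2 = c * (norm z)\<^sup>2" for z
    by (simp add: power2_norm_eq_inner assms)
  have "(det2 (g u) (g v))\<^sup>2 = (norm (g u))\<^sup>2 * (norm (g v))\<^sup>2 - (g u \<bullet> g v)\<^sup>2"
    using det2_lagrange[of "g u" "g v"] by linarith
  also have "\<dots> = c\<^sup>2 * ((norm u)\<^sup>2 * (norm v)\<^sup>2 - (u \<bullet> v)\<^sup>2)"
    unfolding norm_g assms by (simp add: power2_eq_square algebra_simps)
  also have "(norm u)\<^sup>2 * (norm v)\<^sup>2 - (u \<bullet> v)\<^sup>2 = (det2 u v)\<^sup>2"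
    using det2_lagrange[of u v] by linarith
  finally show ?thesis .
qed

lemma lattice_gen_mem: "of_int a *\<^sub>R u + of_int b *\<^sub>R v \<in> lattice_gen u v"
  unfolding lattice_gen_def by blast

lemma lattice_gen_memE:
  assumes "z \<in> lattice_gen u v"
  obtains a b :: int where "z = of_int a *\<^sub>R u + of_int b *\<^sub>R v"
  using assms unfolding lattice_gen_def by blast

lemma basis_mem_lattice_gen:
  "u \<in> lattice_gen u v" "v \<in> lattice_gen u v" "u + v \<in> lattice_gen u v" "u - v \<in> lattice_gen u v"
  using lattice_gen_mem[of 1 u 0 v] lattice_gen_mem[of 0 u 1 v]
    lattice_gen_mem[of 1 u 1 v] lattice_gen_mem[of 1 u "-1" v]
  by simp_all

lemma lattice_gen_uminus_right: "lattice_gen u (- v) = lattice_gen u v"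
proof (intro equalityI subsetI)
  fix z assume "z \<in> lattice_gen u (- v)"
  then obtain a b :: int where "z = of_int a *\<^sub>R u + of_int b *\<^sub>R (- v)"
    by (rule lattice_gen_memE)
  then have "z = of_int a *\<^sub>R u + of_int (- b) *\<^sub>R v"
    by simp
  then show "z \<in> lattice_gen u v"
    by (simp only: lattice_gen_mem)
next
  fix z assume "z \<in> lattice_gen u v"
  then obtain a b :: int where "z = of_int a *\<^sub>R u + of_int b *\<^sub>R v"
    by (rule lattice_gen_memE)
  then have "z = of_int a *\<^sub>R u + of_int (- b) *\<^sub>R (- v)"
    by simp
  then show "z \<in> lattice_gen u (- v)"
    by (simp only: lattice_gen_mem)
qed

lemma linear_image_lattice_gen:
  assumes "linear f"
  shows "f ` lattice_gen u v = lattice_gen (f u) (f v)"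
proof -
  have image: "f (of_int a *\<^sub>R u + of_int b *\<^sub>R v) = of_int a *\<^sub>R f u + of_int b *\<^sub>R f v" for a b
    using assms by (simp add: linear_add linear_scale)
  show ?thesis
  proof (intro equalityI subsetI)
    fix z assume "z \<in> f ` lattice_gen u v"
    then obtain a b :: int where "z = f (of_int a *\<^sub>R u + of_int b *\<^sub>R v)"
      by (auto elim: lattice_gen_memE)
    then show "z \<in> lattice_gen (f u) (f v)"
      by (simp add: image lattice_gen_mem)
  next
    fix z assume "z \<in> lattice_gen (f u) (f v)"
    then obtain a b :: int where "z = f (of_int a *\<^sub>R u + of_int b *\<^sub>R v)"
      unfolding image by (rule lattice_gen_memE)
    then show "z \<in> f ` lattice_gen u v"
      using lattice_gen_mem by blast
  qed
qed

lemma lattice_basis_abs_det2_eq: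
  assumes "is_lattice_basis L u v" "is_lattice_basis L x y"
  shows "\<bar>det2 x y\<bar> = \<bar>det2 u v\<bar>"
proof -
  have D: "det2 u v \<noteq> 0" and L: "lattice_gen u v = lattice_gen x y"
    using assms by (auto simp: is_lattice_basis_def)
  have "x \<in> lattice_gen u v" "y \<in> lattice_gen u v"
    unfolding L by (rule basis_mem_lattice_gen)+
  then obtain a b c d :: int
    where "x = of_int a *\<^sub>R u + of_int b *\<^sub>R v" "y = of_int c *\<^sub>R u + of_int d *\<^sub>R v"
    by (elim lattice_gen_memE)
  then have e1: "det2 x y = of_int (a*d - b*c) * det2 u v"
    by (simp add: det2_lincomb)
  have "u \<in> lattice_gen x y" "v \<in> lattice_gen x y"
    unfolding L[symmetric] by (rule basis_mem_lattice_gen)+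
  then obtain a' b' c' d' :: int
    where "u = of_int a' *\<^sub>R x + of_int b' *\<^sub>R y" "v = of_int c' *\<^sub>R x + of_int d' *\<^sub>R y"
    by (elim lattice_gen_memE)
  then have e2: "det2 u v = of_int (a'*d' - b'*c') * det2 x y"
    by (simp add: det2_lincomb)
  have "of_int ((a'*d' - b'*c') * (a*d - b*c)) * det2 u v = det2 u v"
    using e2 unfolding e1 by (simp add: mult.assoc)
  then have "(a'*d' - b'*c') * (a*d - b*c) = 1"
    using D by (simp only: mult_cancel_right2 of_int_eq_1_iff) simp
  then have "\<bar>a*d - b*c\<bar> = 1"
    by (auto simp: zmult_eq_1_iff)
  then have "\<bar>real_of_int (a*d - b*c)\<bar> = 1"
    by (metis of_int_1 of_int_abs)
  then show ?thesis
    using e1 by (simp add: abs_mult)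
qed

lemma lattice_det_eq: "is_lattice_basis L u v \<Longrightarrow> lattice_det L = \<bar>det2 u v\<bar>"
  unfolding lattice_det_def by (rule the_equality) (auto dest: lattice_basis_abs_det2_eq)

subsection \<open>Minimal bases\<close>

lemma lattice_min_le: "y \<in> L \<Longrightarrow> y \<noteq> 0 \<Longrightarrow> lattice_min L \<le> (norm y)\<^sup>2"
  unfolding lattice_min_def by (rule cInf_lower) (auto intro: bdd_belowI[of _ 0])

lemma int_binary_form_ge_1:
  fixes a b :: int
  assumes "(a, b) \<noteq> (0, 0)"
  shows "1 \<le> a*a + b*b - \<bar>a*b\<bar>"
proof -
  have form: "a*a + b*b - \<bar>a*b\<bar> = (\<bar>a\<bar> - \<bar>b\<bar>)\<^sup>2 + \<bar>a\<bar> * \<bar>b\<bar>"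
    by (simp add: abs_mult power2_eq_square algebra_simps)
  show ?thesis
  proof (cases "a = 0 \<or> b = 0")
    case True
    then have "1 \<le> (\<bar>a\<bar> - \<bar>b\<bar>)\<^sup>2"
      using assms by (auto simp: int_one_le_iff_zero_less)
    then show ?thesis
      unfolding form by (simp add: add_increasing2)
  next
    case False
    then have "1 \<le> \<bar>a\<bar> * \<bar>b\<bar>"
      by (simp add: int_one_le_iff_zero_less)
    then show ?thesis
      unfolding form by (simp add: add_increasing)
  qed
qed

lemma lattice_min_reduced_basis:
  assumes D: "det2 u v \<noteq> 0" and N: "norm v = norm u" and R: "2 * \<bar>u \<bullet> v\<bar> \<le> (norm u)\<^sup>2"
  shows "lattice_min (lattice_gen u v) = (norm u)\<^sup>2"
proof -
  let ?s = "(norm u)\<^sup>2"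
  have uu: "u \<bullet> u = ?s" "v \<bullet> v = ?s"
    using N by (metis power2_norm_eq_inner)+
  have "?s \<le> (norm z)\<^sup>2" if z_mem: "z \<in> lattice_gen u v" and "z \<noteq> 0" for z
  proof -
    obtain a b :: int where z: "z = of_int a *\<^sub>R u + of_int b *\<^sub>R v"
      using z_mem by (rule lattice_gen_memE)
    have "(a, b) \<noteq> (0, 0)"
      using \<open>z \<noteq> 0\<close> z by auto
    then have "(1::real) \<le> of_int (a*a + b*b - \<bar>a*b\<bar>)"
      by (metis int_binary_form_ge_1 of_int_1 of_int_le_iff)
    then have "?s \<le> of_int (a*a + b*b - \<bar>a*b\<bar>) * ?s"
      using mult_right_mono[of 1 _ ?s] by simp
    also have "\<dots> = (of_int a * a + of_int b * b) * ?s - \<bar>of_int a * of_int b\<bar> * ?s"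
      by (simp add: algebra_simps)
    also have "\<dots> \<le> (of_int a * a + of_int b * b) * ?s + 2 * (of_int a * b) * (u \<bullet> v)"
    proof -
      have "\<bar>2 * (of_int a * b) * (u \<bullet> v)\<bar> = \<bar>of_int a * of_int b\<bar> * (2 * \<bar>u \<bullet> v\<bar>)"
        by (simp add: abs_mult)
      also have "\<dots> \<le> \<bar>of_int a * of_int b\<bar> * ?s"
        using R by (intro mult_left_mono) simp_all
      finally show ?thesis by linarith
    qed
    also have "\<dots> = z \<bullet> z"
      unfolding z inner_lincomb uu by (simp add: algebra_simps)
    finally show ?thesis
      by (simp add: power2_norm_eq_inner)
  qed
  then show ?thesis
    unfolding lattice_min_def
    using basis_mem_lattice_gen(1) det2_nonzero_imp_nonzero[OF D]
    by (intro cInf_eq_minimum) auto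
qed

lemma reduced_basis_minimal:
  assumes "det2 u v \<noteq> 0" "norm v = norm u" "2 * \<bar>u \<bullet> v\<bar> \<le> (norm u)\<^sup>2"
  shows "minimal_basis (lattice_gen u v) u v"
  using assms lattice_min_reduced_basis[OF assms]
  by (simp add: minimal_basis_def is_lattice_basis_def)

lemma minimal_basis_imp_well_rounded: "minimal_basis L u v \<Longrightarrow> well_rounded L"
  by (auto simp: well_rounded_def full_rank_lattice_def minimal_basis_def)

lemma minimal_basisD:
  assumes "minimal_basis L u v"
  shows "det2 u v \<noteq> 0" "L = lattice_gen u v" "(norm u)\<^sup>2 = lattice_min L"
    "norm v = norm u" "u \<bullet> u = lattice_min L" "v \<bullet> v = lattice_min L"
    "norm u * norm v = lattice_min L" "lattice_min L > 0"
proof -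
  show D: "det2 u v \<noteq> 0" "L = lattice_gen u v" and s: "(norm u)\<^sup>2 = lattice_min L"
    using assms by (auto simp: minimal_basis_def is_lattice_basis_def)
  have "(norm v)\<^sup>2 = (norm u)\<^sup>2"
    using assms by (simp add: minimal_basis_def)
  then show N: "norm v = norm u"
    by (rule power2_eq_imp_eq) simp_all
  show "u \<bullet> u = lattice_min L" "v \<bullet> v = lattice_min L"
    unfolding power2_norm_eq_inner[symmetric] using s N by simp_all
  show "norm u * norm v = lattice_min L"
    using s N by (simp add: power2_eq_square)
  have "0 < (norm u)\<^sup>2"
    using det2_nonzero_imp_nonzero(1)[OF D(1)] by simp
  then show "lattice_min L > 0"
    using s by simp
qed

text \<open>Minimality against \<open>u \<pm> v\<close> bounds \<open>2|u\<bullet>v|\<close>; replacing v by -v makes \<open>u\<bullet>v \<ge> 0\<close>.\<close>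

lemma well_rounded_obtain_reduced_basis:
  assumes "well_rounded L"
  obtains u v where "minimal_basis L u v" "0 \<le> u \<bullet> v" "2 * (u \<bullet> v) \<le> (norm u)\<^sup>2"
proof -
  obtain u v where mb: "minimal_basis L u v"
    using assms by (auto simp: well_rounded_def)
  note F = minimal_basisD[OF mb]
  let ?s = "lattice_min L"
  have "u \<noteq> v" "v \<noteq> - u"
    using F(1) by (auto simp: det2_def)
  then have "u - v \<noteq> 0" "u + v \<noteq> 0"
    by (simp_all add: add_eq_0_iff)
  moreover have "u - v \<in> L" "u + v \<in> L"
    using basis_mem_lattice_gen(3,4) F(2) by simp_all
  ultimately have "?s \<le> (norm (u - v))\<^sup>2" "?s \<le> (norm (u + v))\<^sup>2"
    by (simp_all add: lattice_min_le)
  moreover have "(norm (u - v))\<^sup>2 = 2 * ?s - 2 * (u \<bullet> v)" "(norm (u + v))\<^sup>2 = 2 * ?s + 2 * (u \<bullet> v)"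
    by (simp_all add: power2_norm_eq_inner inner_diff_left inner_diff_right inner_add_left
        inner_add_right inner_commute F(5,6))
  ultimately have bound: "2 * (u \<bullet> v) \<le> ?s" "2 * (u \<bullet> - v) \<le> ?s"
    by simp_all
  show thesis
  proof (cases "0 \<le> u \<bullet> v")
    case True
    then show thesis
      using that[OF mb] bound(1) F(3) by simp
  next
    case False
    have "minimal_basis L u (- v)"
      using mb lattice_gen_uminus_right[of u v]
      by (auto simp: minimal_basis_def is_lattice_basis_def det2_def)
    then show thesis
      using that False bound(2) F(3) by simp
  qed
qed

subsection \<open>The angle of a well-rounded lattice\<close>

lemma cos_vec_angle:
  assumes "u \<noteq> 0" "v \<noteq> 0"
  shows "cos (vec_angle u v) = (u \<bullet> v) / (norm u * norm v)"
proof -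
  have "\<bar>u \<bullet> v\<bar> \<le> norm u * norm v"
    by (rule Cauchy_Schwarz_ineq2)
  then have "-1 \<le> (u \<bullet> v) / (norm u * norm v)" "(u \<bullet> v) / (norm u * norm v) \<le> 1"
    using assms by (auto simp: divide_simps abs_le_iff)
  then show ?thesis
    unfolding vec_angle_def by simp
qed

lemma cos_vec_angle_minimal_basis:
  assumes "minimal_basis L u v"
  shows "cos (vec_angle u v) = (u \<bullet> v) / lattice_min L"
proof -
  note F = minimal_basisD[OF assms]
  show ?thesis
    using cos_vec_angle[OF det2_nonzero_imp_nonzero[OF F(1)]] F(7) by simp
qed

text \<open>
  Any two minimal bases have the same \<open>|det2|\<close> and the same norms, hence by Lagrange's
  identity the same \<open>|u\<bullet>v|\<close>; an angle in \<open>[\<pi>/3, \<pi>/2]\<close> fixes the sign.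
\<close>

lemma wr_angle_reduced_basis:
  assumes mb: "minimal_basis L u v" and "0 \<le> u \<bullet> v" "2 * (u \<bullet> v) \<le> (norm u)\<^sup>2"
  shows "wr_angle L = vec_angle u v"
  unfolding wr_angle_def
proof (rule the_equality)
  note F = minimal_basisD[OF mb]
  let ?s = "lattice_min L"
  have va: "vec_angle u v = arccos ((u \<bullet> v) / ?s)"
    unfolding vec_angle_def F(7) ..
  have "0 \<le> (u \<bullet> v) / ?s" "(u \<bullet> v) / ?s \<le> 1/2"
    using assms(2,3) F(3,8) by (simp_all add: divide_simps)
  then have "arccos (1/2) \<le> arccos ((u \<bullet> v) / ?s)" "arccos ((u \<bullet> v) / ?s) \<le> arccos 0"
    by (intro arccos_le_arccos; linarith)+
  then have "pi/3 \<le> vec_angle u v" "vec_angle u v \<le> pi/2"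
    unfolding va by simp_all
  then show "\<exists>x y. minimal_basis L x y \<and> vec_angle u v = vec_angle x y
      \<and> pi/3 \<le> vec_angle u v \<and> vec_angle u v \<le> pi/2"
    using mb by blast
  fix t
  assume "\<exists>x y. minimal_basis L x y \<and> t = vec_angle x y \<and> pi/3 \<le> t \<and> t \<le> pi/2"
  then obtain x y where mb': "minimal_basis L x y" and t: "t = vec_angle x y" "pi/3 \<le> t" "t \<le> pi/2"
    by blast
  note G = minimal_basisD[OF mb']
  have "0 \<le> cos t"
    using t(2,3) by (intro cos_ge_zero) auto
  then have "0 \<le> x \<bullet> y"
    using cos_vec_angle_minimal_basis[OF mb'] t(1) G(8) by (simp add: zero_le_divide_iff)
  have "\<bar>det2 x y\<bar> = \<bar>det2 u v\<bar>"
    using lattice_basis_abs_det2_eq[of L u v x y] mb mb' by (simp add: minimal_basis_def)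
  then have "(det2 x y)\<^sup>2 = (det2 u v)\<^sup>2"
    by (metis power2_abs)
  moreover have "(det2 x y)\<^sup>2 + (x \<bullet> y)\<^sup>2 = ?s\<^sup>2" "(det2 u v)\<^sup>2 + (u \<bullet> v)\<^sup>2 = ?s\<^sup>2"
    using det2_lagrange[of x y] det2_lagrange[of u v] G(7) F(7) by (simp_all flip: power_mult_distrib)
  ultimately have "(x \<bullet> y)\<^sup>2 = (u \<bullet> v)\<^sup>2"
    by linarith
  with \<open>0 \<le> x \<bullet> y\<close> assms(2) have "x \<bullet> y = u \<bullet> v"
    by (simp add: power2_eq_iff_nonneg)
  then show "t = vec_angle u v"
    unfolding t(1) vec_angle_def G(7) F(7) by (rule arg_cong)
qed

subsection \<open>Similarity\<close>

lemma similarity_inner: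
  assumes "orthogonal_transformation A"
  shows "(\<alpha> *\<^sub>R A z) \<bullet> (\<alpha> *\<^sub>R A w) = \<alpha>\<^sup>2 * (z \<bullet> w)"
  using assms by (simp add: orthogonal_transformation_def power2_eq_square)

lemma similarity_linear:
  assumes "orthogonal_transformation A"
  shows "linear (\<lambda>z. \<alpha> *\<^sub>R A z)"
  using assms by (simp add: orthogonal_transformation_def linear_compose_scale_right)

lemma vec_angle_scaled_inner:
  assumes scaled: "\<And>z w. g z \<bullet> g w = c * (z \<bullet> w)" and "c > 0"
  shows "vec_angle (g u) (g v) = vec_angle u v"
proof -
  have "norm (g z) = sqrt c * norm z" for z
    using \<open>c > 0\<close> by (simp add: norm_eq_sqrt_inner scaled real_sqrt_mult)
  then have "norm (g u) * norm (g v) = c * (norm u * norm v)"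
    using \<open>c > 0\<close> by (simp add: algebra_simps)
  then show ?thesis
    unfolding vec_angle_def scaled using \<open>c > 0\<close> by simp
qed

lemma linear_apply_cramer:
  assumes "linear g" "det2 u v \<noteq> 0"
  shows "g z = (det2 z v / det2 u v) *\<^sub>R g u + (det2 u z / det2 u v) *\<^sub>R g v"
proof -
  have "g z = g ((det2 z v / det2 u v) *\<^sub>R u + (det2 u z / det2 u v) *\<^sub>R v)"
    using cramer_real2[OF assms(2), of z] by (rule arg_cong)
  also have "\<dots> = (det2 z v / det2 u v) *\<^sub>R g u + (det2 u z / det2 u v) *\<^sub>R g v"
    using assms(1) by (simp add: linear_add linear_scale)
  finally show ?thesis .
qed

lemma inner_lincomb_proportional_gram:
  assumes "x \<bullet> x = c * (u \<bullet> u)" "x \<bullet> y = c * (u \<bullet> v)" "y \<bullet> y = c * (v \<bullet> v)"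
  shows "(a *\<^sub>R x + b *\<^sub>R y) \<bullet> (a' *\<^sub>R x + b' *\<^sub>R y) =
    c * ((a *\<^sub>R u + b *\<^sub>R v) \<bullet> (a' *\<^sub>R u + b' *\<^sub>R v))"
  unfolding inner_lincomb assms inner_commute[of y x] by (simp add: algebra_simps)

text \<open>
  The linear map g with \<open>g u = x\<close>, \<open>g v = y\<close> scales every inner product by c, since it
  does so on the basis; so \<open>g / \<surd>c\<close> is orthogonal.
\<close>

lemma similar_lattices_of_proportional_gram:
  assumes D: "det2 u v \<noteq> 0" and "c > 0"
    and gram: "x \<bullet> x = c * (u \<bullet> u)" "x \<bullet> y = c * (u \<bullet> v)" "y \<bullet> y = c * (v \<bullet> v)"
  shows "similar_lattices (lattice_gen u v) (lattice_gen x y)"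
proof -
  obtain g where g: "linear g" "g u = x" "g v = y"
    using linear_map_of_basis[OF D] .
  define \<alpha> where "\<alpha> = sqrt c"
  have "\<alpha> > 0" "\<alpha>\<^sup>2 = c"
    using \<open>c > 0\<close> by (simp_all add: \<alpha>_def)
  have g_inner: "g z \<bullet> g w = \<alpha>\<^sup>2 * (z \<bullet> w)" for z w
  proof -
    let ?a = "\<lambda>z. det2 z v / det2 u v" and ?b = "\<lambda>z. det2 u z / det2 u v"
    have gz: "g z = ?a z *\<^sub>R x + ?b z *\<^sub>R y" for z
      using linear_apply_cramer[OF g(1) D, of z] g(2,3) by simp
    have "g z \<bullet> g w = (?a z *\<^sub>R x + ?b z *\<^sub>R y) \<bullet> (?a w *\<^sub>R x + ?b w *\<^sub>R y)"
      by (simp only: gz)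
    also have "\<dots> = c * ((?a z *\<^sub>R u + ?b z *\<^sub>R v) \<bullet> (?a w *\<^sub>R u + ?b w *\<^sub>R v))"
      by (rule inner_lincomb_proportional_gram[OF gram])
    also have "\<dots> = \<alpha>\<^sup>2 * (z \<bullet> w)"
      by (simp only: \<open>\<alpha>\<^sup>2 = c\<close> cramer_real2[OF D, symmetric])
    finally show ?thesis .
  qed
  define A where "A = (\<lambda>z. (1/\<alpha>) *\<^sub>R g z)"
  have "A z \<bullet> A w = z \<bullet> w" for z w
  proof -
    have "A z \<bullet> A w = ((1/\<alpha>) * (1/\<alpha>) * \<alpha>\<^sup>2) * (z \<bullet> w)"
      by (simp add: A_def g_inner)
    also have "(1/\<alpha>) * (1/\<alpha>) * \<alpha>\<^sup>2 = 1"
      using \<open>\<alpha> > 0\<close> by (simp add: power2_eq_square)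
    finally show ?thesis
      by simp
  qed
  moreover have "linear A"
    unfolding A_def using g(1) by (rule linear_compose_scale_right)
  ultimately have orth: "orthogonal_transformation A"
    by (simp add: orthogonal_transformation_def)
  have "\<alpha> *\<^sub>R A z = g z" for z
    using \<open>\<alpha> > 0\<close> by (simp add: A_def)
  then have gen: "lattice_gen x y = (\<lambda>z. \<alpha> *\<^sub>R A z) ` lattice_gen u v"
    using linear_image_lattice_gen[OF g(1), of u v] g(2,3) by simp
  show ?thesis
    unfolding similar_lattices_def
  proof (intro exI conjI)
    show "\<alpha> \<noteq> 0"
      using \<open>\<alpha> > 0\<close> by simp
  qed (fact orth gen)+
qed

lemma similar_lattices_imp_wr_angle_eq:
  assumes mb: "minimal_basis L u v" and uv: "0 \<le> u \<bullet> v" "2 * (u \<bullet> v) \<le> (norm u)\<^sup>2"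
    and "similar_lattices L G"
  shows "wr_angle G = vec_angle u v"
proof -
  obtain \<alpha> A where "\<alpha> \<noteq> 0" and A: "orthogonal_transformation A"
    and G_eq: "G = (\<lambda>z. \<alpha> *\<^sub>R A z) ` L"
    using assms(4) unfolding similar_lattices_def by blast
  define f where "f z = \<alpha> *\<^sub>R A z" for z
  have fi: "f z \<bullet> f w = \<alpha>\<^sup>2 * (z \<bullet> w)" for z w
    unfolding f_def using similarity_inner[OF A] .
  have a2: "\<alpha>\<^sup>2 > 0"
    using \<open>\<alpha> \<noteq> 0\<close> by simp
  have nf: "(norm (f z))\<^sup>2 = \<alpha>\<^sup>2 * (norm z)\<^sup>2" for z
    by (simp add: power2_norm_eq_inner fi)
  note F = minimal_basisD[OF mb]
  have "(det2 (f u) (f v))\<^sup>2 = (\<alpha>\<^sup>2)\<^sup>2 * (det2 u v)\<^sup>2"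
    using fi by (rule det2_sq_of_scaled_inner)
  then have "det2 (f u) (f v) \<noteq> 0"
    using F(1) a2 by auto
  moreover have "(norm (f v))\<^sup>2 = (norm (f u))\<^sup>2"
    using nf[of u] nf[of v] F(4) by simp
  then have "norm (f v) = norm (f u)"
    by (rule power2_eq_imp_eq) simp_all
  moreover have fuv: "0 \<le> f u \<bullet> f v" "2 * (f u \<bullet> f v) \<le> (norm (f u))\<^sup>2"
    using uv a2 by (simp_all add: fi nf)
  moreover have "G = lattice_gen (f u) (f v)"
    using linear_image_lattice_gen[OF similarity_linear[OF A]] F(2) G_eq by (simp add: f_def)
  ultimately have "minimal_basis G (f u) (f v)"
    by (simp add: reduced_basis_minimal)
  then show ?thesis
    using wr_angle_reduced_basis[OF _ fuv] vec_angle_scaled_inner[OF fi a2] by simp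
qed

theorem well_rounded_similar_iff_wr_angle_eq:
  assumes "well_rounded L" "well_rounded G"
  shows "similar_lattices L G \<longleftrightarrow> wr_angle G = wr_angle L"
proof -
  obtain u v where mb: "minimal_basis L u v" and uv: "0 \<le> u \<bullet> v" "2 * (u \<bullet> v) \<le> (norm u)\<^sup>2"
    using assms(1) by (rule well_rounded_obtain_reduced_basis)
  obtain x y where mb': "minimal_basis G x y" and xy: "0 \<le> x \<bullet> y" "2 * (x \<bullet> y) \<le> (norm x)\<^sup>2"
    using assms(2) by (rule well_rounded_obtain_reduced_basis)
  note F = minimal_basisD[OF mb] and F' = minimal_basisD[OF mb']
  have angles: "wr_angle L = vec_angle u v" "wr_angle G = vec_angle x y"
    using wr_angle_reduced_basis mb uv mb' xy by blast+
  show ?thesis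
  proof
    assume "similar_lattices L G"
    then show "wr_angle G = wr_angle L"
      using similar_lattices_imp_wr_angle_eq[OF mb uv] angles(1) by simp
  next
    assume "wr_angle G = wr_angle L"
    then have "cos (vec_angle x y) = cos (vec_angle u v)"
      using angles by simp
    then have "(x \<bullet> y) / lattice_min G = (u \<bullet> v) / lattice_min L"
      unfolding cos_vec_angle_minimal_basis[OF mb] cos_vec_angle_minimal_basis[OF mb'] .
    define c where "c = lattice_min G / lattice_min L"
    have "c > 0" "x \<bullet> x = c * (u \<bullet> u)" "y \<bullet> y = c * (v \<bullet> v)"
      using F(5,6,8) F'(5,6,8) by (simp_all add: c_def)
    moreover have "x \<bullet> y = c * (u \<bullet> v)"
      using \<open>(x \<bullet> y) / lattice_min G = _\<close> F(8) F'(8) by (simp add: c_def field_simps)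
    ultimately have "similar_lattices (lattice_gen u v) (lattice_gen x y)"
      using similar_lattices_of_proportional_gram[OF F(1)] by blast
    then show "similar_lattices L G"
      using F(2) F'(2) by simp
  qed
qed

subsection \<open>The lattice \<open>\<Omega>\<close>\<close>

lemma hex_lattice_det: "lattice_det hex_lattice = sqrt 3 / 2"
proof -
  have "is_lattice_basis hex_lattice (vec2 1 0) (vec2 (-1/2) (sqrt 3 / 2))"
    by (simp add: is_lattice_basis_def hex_lattice_def det2_def)
  then show ?thesis
    by (simp add: lattice_det_eq det2_def)
qed

text \<open>\<open>a(m, n\<surd>3) + b(m, -n\<surd>3) = (a(m+n) + b(m-n))\<cdot>(1, 0) + 2n(a-b)\<cdot>(-1/2, \<surd>3/2)\<close>.\<close>

lemma omega_subset_hex_lattice: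
  fixes m n :: int
  shows "lattice_gen (vec2 m (n * sqrt 3)) (vec2 m (- n * sqrt 3)) \<subseteq> hex_lattice"
proof
  fix z assume "z \<in> lattice_gen (vec2 m (n * sqrt 3)) (vec2 m (- n * sqrt 3))"
  then obtain a b :: int where z: "z = of_int a *\<^sub>R vec2 m (n * sqrt 3) + of_int b *\<^sub>R vec2 m (- n * sqrt 3)"
    by (rule lattice_gen_memE)
  have "z = of_int (a * (m + n) + b * (m - n)) *\<^sub>R vec2 1 0
          + of_int (2 * n * (a - b)) *\<^sub>R vec2 (-1/2) (sqrt 3 / 2)"
    unfolding vec2_eq_iff z by (simp add: algebra_simps)
  then show "z \<in> hex_lattice"
    unfolding hex_lattice_def by (simp only: lattice_gen_mem)
qed

lemma omega_basis_gram:
  fixes m n :: real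
  shows "(norm (vec2 m (n * sqrt 3)))\<^sup>2 = m\<^sup>2 + 3 * n\<^sup>2"
    and "(norm (vec2 m (- n * sqrt 3)))\<^sup>2 = m\<^sup>2 + 3 * n\<^sup>2"
    and "vec2 m (n * sqrt 3) \<bullet> vec2 m (- n * sqrt 3) = m\<^sup>2 - 3 * n\<^sup>2"
    and "det2 (vec2 m (n * sqrt 3)) (vec2 m (- n * sqrt 3)) = - (2 * m * n * sqrt 3)"
  by (simp_all add: norm_power2_real2 inner_real2 det2_def power_mult_distrib)
    (simp_all add: power2_eq_square)

lemma omega_reduced_basis:
  fixes m n :: real
  assumes "n > 0" "sqrt 3 < m / n" "m / n \<le> 3"
  defines "u \<equiv> vec2 m (n * sqrt 3)" and "v \<equiv> vec2 m (- n * sqrt 3)"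
  shows "minimal_basis (lattice_gen u v) u v" "0 \<le> u \<bullet> v" "2 * (u \<bullet> v) \<le> (norm u)\<^sup>2"
proof -
  note gram = omega_basis_gram[of m n, folded u_def v_def]
  have bounds: "sqrt 3 * n < m" "m \<le> 3 * n" "0 \<le> sqrt 3 * n"
    using assms(1-3) by (simp_all add: pos_less_divide_eq pos_divide_le_eq)
  then have "0 < m"
    by linarith
  have "(sqrt 3 * n)\<^sup>2 < m\<^sup>2"
    by (rule power_strict_mono) (use bounds in linarith)+
  moreover have "m\<^sup>2 \<le> (3 * n)\<^sup>2"
    by (rule power_mono) (use bounds in linarith)+
  ultimately have "0 < m\<^sup>2 - 3 * n\<^sup>2" "2 * (m\<^sup>2 - 3 * n\<^sup>2) \<le> m\<^sup>2 + 3 * n\<^sup>2"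
    by (simp_all add: power_mult_distrib)
  then show reduced: "0 \<le> u \<bullet> v" "2 * (u \<bullet> v) \<le> (norm u)\<^sup>2"
    unfolding gram by simp_all
  have "det2 u v \<noteq> 0"
    unfolding gram using \<open>0 < m\<close> assms(1) by simp
  moreover have "norm v = norm u"
    by (rule power2_eq_imp_eq) (simp_all add: gram(1,2))
  ultimately show "minimal_basis (lattice_gen u v) u v"
    using reduced by (intro reduced_basis_minimal) simp_all
qed

theorem lemma3p2:
  fixes m n :: nat and \<theta> :: real
  assumes "m > 0" "n > 0" "coprime m n"
    and "sqrt 3 < real m / real n" "real m / real n \<le> 3"
    and "pi/3 \<le> \<theta>" "\<theta> < pi/2"
    and "cos \<theta> = (real m ^ 2 - 3 * real n ^ 2) / (real m ^ 2 + 3 * real n ^ 2)"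
    and "sin \<theta> = (2 * real m * real n) / (real m ^ 2 + 3 * real n ^ 2) * sqrt 3"
  shows "let p = real m ^ 2 - 3 * real n ^ 2; r = 2 * real m * real n;
             q = real m ^ 2 + 3 * real n ^ 2;
             \<Omega> = lattice_gen (vec2 (real m) (real n * sqrt 3)) (vec2 (real m) (- real n * sqrt 3))
         in \<Omega> \<in> WR_hex \<and> lattice_min \<Omega> = q \<and> lattice_det \<Omega> = r * sqrt 3
            \<and> lattice_index hex_lattice \<Omega> = 2 * r \<and> \<Omega> \<in> C_hex \<theta>
            \<and> C_hex \<theta> = {\<Gamma> \<in> WR_hex. similar_lattices \<Omega> \<Gamma>}"
proof -
  define u where "u = vec2 (real m) (real n * sqrt 3)"
  define v where "v = vec2 (real m) (- real n * sqrt 3)"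
  define \<Omega> where "\<Omega> = lattice_gen u v"
  note gram = omega_basis_gram[of "real m" "real n", folded u_def v_def]
  note reduced = omega_reduced_basis[of "real n" "real m", folded u_def v_def, folded \<Omega>_def]
  have mb: "minimal_basis \<Omega> u v" and uv: "0 \<le> u \<bullet> v" "2 * (u \<bullet> v) \<le> (norm u)\<^sup>2"
    using reduced assms(2,4,5) by simp_all
  have WR: "\<Omega> \<in> WR_hex"
    using minimal_basis_imp_well_rounded[OF mb] omega_subset_hex_lattice[of "int m" "int n"]
    by (simp add: WR_hex_def well_rounded_def \<Omega>_def u_def v_def)
  have min: "lattice_min \<Omega> = real m ^ 2 + 3 * real n ^ 2"
    using minimal_basisD(3)[OF mb] gram(1) by simp
  have det: "lattice_det \<Omega> = 2 * real m * real n * sqrt 3"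
    using lattice_det_eq[of \<Omega> u v] mb gram(4) by (simp add: minimal_basis_def)
  have index: "lattice_index hex_lattice \<Omega> = 2 * (2 * real m * real n)"
    by (simp add: lattice_index_def det hex_lattice_det)
  have "\<theta> = arccos (cos \<theta>)"
    using assms(6,7) pi_gt_zero by (simp add: arccos_cos)
  then have angle: "wr_angle \<Omega> = \<theta>"
    unfolding wr_angle_reduced_basis[OF mb uv] vec_angle_def minimal_basisD(7)[OF mb] min gram(3)
      assms(8) by simp
  have "\<Omega> \<in> C_hex \<theta>"
    using WR angle by (simp add: C_hex_def)
  moreover have "C_hex \<theta> = {\<Gamma> \<in> WR_hex. similar_lattices \<Omega> \<Gamma>}"
    using well_rounded_similar_iff_wr_angle_eq WR angle by (auto simp: C_hex_def WR_hex_def)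
  ultimately show ?thesis
    unfolding Let_def \<Omega>_def[symmetric] u_def[symmetric] v_def[symmetric]
    using WR min det index by simp
qed

end
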